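(* Let $G$ be an undirected graph, $P$ a set of terminal pairs of $G$, and $x\in V(G)$ such that $G-\{x\}$ is a forest. Assume that each vertex of $G$ occurs in at most one terminal pair, every terminal has degree $1$ in $G$, the two terminals of a pair are not adjacent, every neighbor of $x$ is a leaf of $G-\{x\}$, and $x$ is not a terminal. Then there is a set of pairwise edge-disjoint paths in $G$ connecting every terminal pair in $P$ if and only if every tree $T$ (connected component) of $G-\{x\}$ is $\gamma_\emptyset$-connected.
   Context: For a tree $T$ of $G-\{x\}$, $T$ is $\gamma_\emptyset$-connected if there exists a set $S$ of pairwise edge-disjoint paths in $G[V(T)\cup\{x\}]$ such that for every terminal $a\in V(T)$ belonging to a terminal pair $\{a,b\}\in P$, the set $S$ either contains an $a$–$x$ path not containing $b$, or contains an $a$–$b$ path not containing $x$. *)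

theory Defs
  imports Main
begin

definition graph :: "'a set \<Rightarrow> 'a set set \<Rightarrow> bool" where
  "graph V E \<longleftrightarrow> finite V \<and> (\<forall>e\<in>E. \<exists>u v. e = {u, v} \<and> u \<noteq> v \<and> u \<in> V \<and> v \<in> V)"

definition is_path :: "'a set set \<Rightarrow> 'a list \<Rightarrow> bool" where
  "is_path E p \<longleftrightarrow> p \<noteq> [] \<and> distinct p \<and> (\<forall>i. Suc i < length p \<longrightarrow> {p ! i, p ! Suc i} \<in> E)"

definition path_edges :: "'a list \<Rightarrow> 'a set set" where
  "path_edges p = {{p ! i, p ! Suc i} | i. Suc i < length p}"

definition path_betw :: "'a set set \<Rightarrow> 'a list \<Rightarrow> 'a \<Rightarrow> 'a \<Rightarrow> bool" where
  "path_betw E p u v \<longleftrightarrow> is_path E p \<and>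
     ((hd p = u \<and> last p = v) \<or> (hd p = v \<and> last p = u))"

definition edge_disjoint :: "'a list set \<Rightarrow> bool" where
  "edge_disjoint S \<longleftrightarrow> (\<forall>p\<in>S. \<forall>q\<in>S. p \<noteq> q \<longrightarrow> path_edges p \<inter> path_edges q = {})"

definition is_cycle :: "'a set set \<Rightarrow> 'a list \<Rightarrow> bool" where
  "is_cycle E c \<longleftrightarrow> length c \<ge> 3 \<and> is_path E c \<and> {last c, hd c} \<in> E"

definition forest :: "'a set \<Rightarrow> 'a set set \<Rightarrow> bool" where
  "forest V E \<longleftrightarrow> graph V E \<and> \<not> (\<exists>c. is_cycle E c)"

definition degree :: "'a set set \<Rightarrow> 'a \<Rightarrow> nat" where
  "degree E v = card {e \<in> E. v \<in> e}"

definition del_verts :: "'a set set \<Rightarrow> 'a \<Rightarrow> 'a set set" where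
  "del_verts E x = {e \<in> E. x \<notin> e}"

definition induced_edges :: "'a set set \<Rightarrow> 'a set \<Rightarrow> 'a set set" where
  "induced_edges E W = {e \<in> E. e \<subseteq> W}"

definition reachable :: "'a set set \<Rightarrow> 'a \<Rightarrow> 'a \<Rightarrow> bool" where
  "reachable E u v \<longleftrightarrow> (\<exists>p. path_betw E p u v)"

definition components :: "'a set \<Rightarrow> 'a set set \<Rightarrow> 'a set set" where
  "components V E = {{w \<in> V. reachable E v w} | v. v \<in> V}"

definition terminal_pairs :: "'a set \<Rightarrow> 'a set set \<Rightarrow> bool" where
  "terminal_pairs V P \<longleftrightarrow> (\<forall>q\<in>P. \<exists>a b. q = {a, b} \<and> a \<noteq> b \<and> a \<in> V \<and> b \<in> V)"

definition gamma_empty_connected ::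
  "'a set set \<Rightarrow> 'a set set \<Rightarrow> 'a \<Rightarrow> 'a set \<Rightarrow> bool" where
  "gamma_empty_connected E P x C \<longleftrightarrow>
     (\<exists>S. (\<forall>p\<in>S. is_path (induced_edges E (C \<union> {x})) p) \<and> edge_disjoint S \<and>
        (\<forall>a\<in>C. \<forall>b. {a, b} \<in> P \<longrightarrow>
            (\<exists>p\<in>S. path_betw (induced_edges E (C \<union> {x})) p a x \<and> b \<notin> set p) \<or>
            (\<exists>p\<in>S. path_betw (induced_edges E (C \<union> {x})) p a b \<and> x \<notin> set p)))"

end

theory Submission
  imports Defs
begin

text \<open>
  Given edge-disjoint paths linking all terminal pairs, cut each of them at x. The pieces are
  still edge-disjoint, and the piece starting at a terminal a either never meets x, and then
  stays inside the tree of a and reaches its partner b, or it ends at x without passing b.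
  The pieces lying in a tree T together with x therefore witness that T is
  gamma-emptyset-connected.

  Conversely, the witnesses of different trees are edge-disjoint because the trees are
  vertex-disjoint and every edge of G[T + x] has an end in T. For a pair {a, b} either one of
  a, b has a witness path to the other, or both have witness paths to x, which concatenate to
  an a-b walk that shortens to a path. A witness path has an end in only one terminal pair
  (x is no terminal), so distinct pairs draw on disjoint sets of witness paths.
\<close>

section \<open>Paths as vertex lists\<close>

lemma path_edges_Nil [simp]: "path_edges [] = {}"
  and path_edges_singleton [simp]: "path_edges [v] = {}"
  by (simp_all add: path_edges_def)

lemma path_edges_Cons_Cons [simp]:
  "path_edges (u # v # vs) = insert {u, v} (path_edges (v # vs))"
proof -
  have "path_edges p = (\<lambda>i. {p ! i, p ! Suc i}) ` {..<length p - 1}" for p :: "'a list"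
    by (auto simp: path_edges_def)
  then show ?thesis
    by (simp add: lessThan_Suc_eq_insert_0 image_image)
qed

lemma path_edges_append:
  "path_edges (xs @ y # ys) = path_edges (xs @ [y]) \<union> path_edges (y # ys)"
  by (induction xs rule: induct_list012) auto

lemma path_edges_append_subset:
  "path_edges xs \<subseteq> path_edges (xs @ ys)" "path_edges ys \<subseteq> path_edges (xs @ ys)"
proof -
  show "path_edges xs \<subseteq> path_edges (xs @ ys)"
    by (induction xs rule: induct_list012) auto
  show "path_edges ys \<subseteq> path_edges (xs @ ys)"
  proof (induction xs)
    case (Cons u xs)
    then show ?case by (cases "xs @ ys") auto
  qed simp
qed

lemma path_edges_rev [simp]: "path_edges (rev p) = path_edges p"
proof (induction p rule: induct_list012)
  case (3 u v vs)
  then show ?case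
    using path_edges_append[of "rev vs" v "[u]"] by (simp add: insert_commute)
qed simp_all

lemma path_edges_join:
  assumes "xs \<noteq> []" "ys \<noteq> []" "last xs = hd ys"
  shows "path_edges (xs @ tl ys) = path_edges xs \<union> path_edges ys"
    and "hd (xs @ tl ys) = hd xs" and "last (xs @ tl ys) = last ys"
proof -
  obtain y zs where ys: "ys = y # zs" using assms(2) by (cases ys) auto
  obtain xs' where xs: "xs = xs' @ [y]"
    using assms(1,3) ys by (metis append_butlast_last_id list.sel(1))
  show "path_edges (xs @ tl ys) = path_edges xs \<union> path_edges ys"
    using path_edges_append[of xs' y zs] xs ys by simp
  show "hd (xs @ tl ys) = hd xs" using assms(1) by simp
  show "last (xs @ tl ys) = last ys" using xs ys by (cases zs) auto
qed

lemma path_edge_subset_set: "e \<in> path_edges p \<Longrightarrow> e \<subseteq> set p"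
  by (auto simp: path_edges_def)

lemma path_edge_doubleton:
  assumes "distinct p" "e \<in> path_edges p"
  shows "\<exists>u v. u \<noteq> v \<and> e = {u, v}"
proof -
  obtain i where "e = {p ! i, p ! Suc i}" "Suc i < length p"
    using assms(2) by (auto simp: path_edges_def)
  moreover have "p ! i \<noteq> p ! Suc i"
    using assms(1) \<open>Suc i < length p\<close> by (simp add: nth_eq_iff_index_eq)
  ultimately show ?thesis by blast
qed

lemma set_subset_Union_path_edges: "tl p \<noteq> [] \<Longrightarrow> set p \<subseteq> \<Union>(path_edges p)"
proof (induction p rule: induct_list012)
  case (3 u v vs)
  then show ?case by (cases vs) auto
qed auto

lemma distinct_shortcut:
  "p \<noteq> [] \<Longrightarrow> \<exists>q. q \<noteq> [] \<and> distinct q \<and> hd q = hd p \<and> last q = last p \<and>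
     set q \<subseteq> set p \<and> path_edges q \<subseteq> path_edges p"
proof (induction p)
  case (Cons u p)
  show ?case
  proof (cases p)
    case Nil
    then show ?thesis by (intro exI[of _ "[u]"]) simp
  next
    case (Cons w ps)
    then obtain q where q: "q \<noteq> []" "distinct q" "hd q = w" "last q = last p" "set q \<subseteq> set p"
        "path_edges q \<subseteq> path_edges p"
      using Cons.IH by auto
    show ?thesis
    proof (cases "u \<in> set q")
      case True
      then obtain ys zs where "q = ys @ u # zs" by (meson split_list)
      then show ?thesis
        using q Cons by (intro exI[of _ "u # zs"]) (auto dest: subsetD[OF path_edges_append_subset(2)])
    next
      case False
      then obtain q' where "q = w # q'" using q(1,3) by (cases q) auto
      then show ?thesis
        using q Cons False by (intro exI[of _ "u # q"]) auto
    qed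
  qed
qed simp

lemma is_path_iff: "is_path E p \<longleftrightarrow> p \<noteq> [] \<and> distinct p \<and> path_edges p \<subseteq> E"
  by (auto simp: is_path_def path_edges_def)

lemma path_betw_iff: "path_betw E p a b \<longleftrightarrow> is_path E p \<and> {hd p, last p} = {a, b}"
  by (auto simp: path_betw_def doubleton_eq_iff)

lemma path_betw_commute: "path_betw E p a b \<longleftrightarrow> path_betw E p b a"
  by (auto simp: path_betw_def)

lemma path_betw_ends_in_set: "path_betw E p a b \<Longrightarrow> a \<in> set p \<and> b \<in> set p"
  by (auto simp: path_betw_def is_path_iff)

lemma path_betw_oriented:
  assumes "path_betw E p a b"
  obtains p' where "p' \<in> {p, rev p}" "is_path E p'" "hd p' = a" "last p' = b"
proof -
  consider "hd p = a" "last p = b" | "hd p = b" "last p = a"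
    using assms unfolding path_betw_def by blast
  then show thesis
    using assms that[of p] that[of "rev p"]
    by cases (auto simp: path_betw_def is_path_iff hd_rev last_rev)
qed

lemma is_path_induced: "is_path E p \<Longrightarrow> set p \<subseteq> W \<Longrightarrow> is_path (induced_edges E W) p"
  by (auto simp: is_path_iff induced_edges_def dest: path_edge_subset_set)

lemma path_betw_induced:
  "path_betw E p a b \<Longrightarrow> set p \<subseteq> W \<Longrightarrow> path_betw (induced_edges E W) p a b"
  by (simp add: path_betw_iff is_path_induced)

lemma path_betw_of_induced: "path_betw (induced_edges E W) p a b \<Longrightarrow> path_betw E p a b"
  by (auto simp: path_betw_iff is_path_iff induced_edges_def)

lemma path_betw_concat:
  assumes "path_betw E p a x" "path_betw E q x b"
  shows "\<exists>g. path_betw E g a b \<and> path_edges g \<subseteq> path_edges p \<union> path_edges q"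
proof -
  obtain p' where p': "p' \<in> {p, rev p}" "is_path E p'" "hd p' = a" "last p' = x"
    using assms(1) by (rule path_betw_oriented)
  obtain q' where q': "q' \<in> {q, rev q}" "is_path E q'" "hd q' = x" "last q' = b"
    using assms(2) by (rule path_betw_oriented)
  have ne: "p' \<noteq> []" "q' \<noteq> []" using p'(2) q'(2) by (auto simp: is_path_iff)
  note join = path_edges_join[OF ne, unfolded p'(4) q'(3), OF refl]
  obtain g where g: "g \<noteq> []" "distinct g" "hd g = a" "last g = b"
      "path_edges g \<subseteq> path_edges p' \<union> path_edges q'"
    using distinct_shortcut[of "p' @ tl q'"] join p'(3) q'(4) ne by auto
  have "path_edges p' \<union> path_edges q' = path_edges p \<union> path_edges q"
    using p'(1) q'(1) by auto
  moreover have "path_edges p' \<union> path_edges q' \<subseteq> E"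
    using p'(2) q'(2) by (simp add: is_path_iff)
  ultimately show ?thesis
    using g by (intro exI[of _ g]) (auto simp: path_betw_def is_path_iff)
qed

section \<open>Reachability and components\<close>

lemma reachable_iff_walk:
  "reachable D u v \<longleftrightarrow> (\<exists>p. p \<noteq> [] \<and> path_edges p \<subseteq> D \<and> hd p = u \<and> last p = v)"
proof
  assume "reachable D u v"
  then obtain p where "path_betw D p u v" by (auto simp: reachable_def)
  then obtain p' where "is_path D p'" "hd p' = u" "last p' = v"
    by (rule path_betw_oriented)
  then show "\<exists>p. p \<noteq> [] \<and> path_edges p \<subseteq> D \<and> hd p = u \<and> last p = v"
    by (auto simp: is_path_iff)
next
  assume "\<exists>p. p \<noteq> [] \<and> path_edges p \<subseteq> D \<and> hd p = u \<and> last p = v"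
  then obtain p where p: "p \<noteq> []" "path_edges p \<subseteq> D" "hd p = u" "last p = v" by blast
  then obtain q where "q \<noteq> []" "distinct q" "hd q = u" "last q = v"
      "path_edges q \<subseteq> path_edges p"
    using distinct_shortcut[OF p(1)] by auto
  then have "path_betw D q u v" using p(2) by (auto simp: path_betw_def is_path_iff)
  then show "reachable D u v" by (auto simp: reachable_def)
qed

lemma reachable_refl: "reachable D u u"
  unfolding reachable_iff_walk by (intro exI[of _ "[u]"]) simp

lemma reachable_sym:
  assumes "reachable D u v"
  shows "reachable D v u"
proof -
  obtain p where "p \<noteq> []" "path_edges p \<subseteq> D" "hd p = u" "last p = v"
    using assms unfolding reachable_iff_walk by blast
  then show ?thesis
    unfolding reachable_iff_walk by (intro exI[of _ "rev p"]) (simp add: hd_rev last_rev)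
qed

lemma reachable_trans:
  assumes "reachable D u v" "reachable D v w"
  shows "reachable D u w"
proof -
  obtain p where p: "p \<noteq> []" "path_edges p \<subseteq> D" "hd p = u" "last p = v"
    using assms(1) unfolding reachable_iff_walk by blast
  obtain q where q: "q \<noteq> []" "path_edges q \<subseteq> D" "hd q = v" "last q = w"
    using assms(2) unfolding reachable_iff_walk by blast
  note join = path_edges_join[OF p(1) q(1)]
  show ?thesis
    unfolding reachable_iff_walk using p q join by (intro exI[of _ "p @ tl q"]) simp
qed

lemma reachable_hd:
  assumes "p \<noteq> []" "path_edges p \<subseteq> D" "w \<in> set p"
  shows "reachable D (hd p) w"
proof -
  obtain ys zs where p: "p = ys @ w # zs" using assms(3) by (meson split_list)
  then have "path_edges (ys @ [w]) \<subseteq> D"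
    using assms(2) p path_edges_append_subset(1)[of "ys @ [w]" zs] by simp
  moreover have "hd (ys @ [w]) = hd p" using p by (cases ys) auto
  ultimately show ?thesis
    unfolding reachable_iff_walk by (intro exI[of _ "ys @ [w]"]) simp
qed

lemma component_eq:
  assumes "C \<in> components W D" "u \<in> C"
  shows "C = {w \<in> W. reachable D u w}"
proof -
  obtain v where v: "C = {w \<in> W. reachable D v w}"
    using assms(1) by (auto simp: components_def)
  then have "reachable D v u" using assms(2) by blast
  then have "reachable D v w \<longleftrightarrow> reachable D u w" for w
    using reachable_sym reachable_trans by metis
  then show ?thesis using v by blast
qed

lemma components_disjoint:
  assumes "C \<in> components W D" "C' \<in> components W D" "C \<noteq> C'"
  shows "C \<inter> C' = {}"
proof (rule ccontr)
  assume "C \<inter> C' \<noteq> {}"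
  then obtain u where "u \<in> C" "u \<in> C'" by blast
  have "C = C'"
    using component_eq[OF assms(1) \<open>u \<in> C\<close>] component_eq[OF assms(2) \<open>u \<in> C'\<close>]
    by (rule trans[OF _ sym])
  then show False using assms(3) by contradiction
qed

lemma component_exists:
  assumes "u \<in> W"
  shows "\<exists>C\<in>components W D. u \<in> C"
proof
  show "{w \<in> W. reachable D u w} \<in> components W D"
    unfolding components_def using assms by blast
  show "u \<in> {w \<in> W. reachable D u w}"
    using assms by (simp add: reachable_refl)
qed

lemma walk_subset_component:
  assumes "C \<in> components W D" "p \<noteq> []" "path_edges p \<subseteq> D" "set p \<subseteq> W" "u \<in> set p" "u \<in> C"
  shows "set p \<subseteq> C"
proof
  fix w assume "w \<in> set p"
  have "reachable D u (hd p)"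
    using reachable_hd[OF assms(2,3,5)] by (rule reachable_sym)
  then have "reachable D u w"
    using reachable_hd[OF assms(2,3) \<open>w \<in> set p\<close>] by (rule reachable_trans)
  then show "w \<in> C"
    using component_eq[OF assms(1,6)] assms(4) \<open>w \<in> set p\<close> by blast
qed

lemma walk_avoiding_vertex_subset_component:
  assumes "graph V E" "C \<in> components (V - {x}) (del_verts E x)"
    and "p \<noteq> []" "path_edges p \<subseteq> E" "x \<notin> set p" "u \<in> set p" "u \<in> C"
  shows "set p \<subseteq> C"
proof (rule walk_subset_component[OF assms(2,3) _ _ assms(6,7)])
  show "path_edges p \<subseteq> del_verts E x"
    using assms(4,5) by (auto simp: del_verts_def dest: path_edge_subset_set)
  have "set p \<subseteq> V"
  proof (cases "tl p = []")
    case True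
    then have "set p = {u}" using assms(3,6) by (cases p) auto
    moreover have "u \<in> V" using assms(2,7) by (auto simp: components_def)
    ultimately show ?thesis by simp
  next
    case False
    have "\<Union>E \<subseteq> V" using assms(1) by (auto simp: graph_def)
    then show ?thesis using set_subset_Union_path_edges[OF False] assms(4) by blast
  qed
  then show "set p \<subseteq> V - {x}" using assms(5) by blast
qed

lemma path_to_vertex_subset_component:
  assumes "graph V E" "C \<in> components (V - {x}) (del_verts E x)"
    and "path_betw E q a x" "a \<in> C"
  shows "set q \<subseteq> insert x C"
proof -
  obtain q' where q': "q' \<in> {q, rev q}" "is_path E q'" "hd q' = a" "last q' = x"
    using assms(3) by (rule path_betw_oriented)
  have "a \<noteq> x" using assms(2,4) by (auto simp: components_def)
  have "q' \<noteq> []" using q'(2) by (simp add: is_path_iff)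
  then obtain ys where ys: "q' = ys @ [x]"
    using q'(4) by (metis append_butlast_last_id)
  then have ne: "ys \<noteq> []" using q'(3) \<open>a \<noteq> x\<close> by auto
  have "path_edges ys \<subseteq> E"
    using q'(2) ys path_edges_append_subset(1)[of ys "[x]"] by (auto simp: is_path_iff)
  moreover have "x \<notin> set ys" using q'(2) ys by (simp add: is_path_iff)
  moreover have "a \<in> set ys" using q'(3) ys ne by (metis hd_append2 hd_in_set)
  ultimately have "set ys \<subseteq> C"
    using walk_avoiding_vertex_subset_component[OF assms(1,2) ne] assms(4) by blast
  moreover have "set q = set q'" using q'(1) by auto
  ultimately show ?thesis using ys by auto
qed

lemma induced_edges_insert_disjoint:
  assumes "graph V E" "A \<inter> B = {}"
  shows "induced_edges E (insert x A) \<inter> induced_edges E (insert x B) = {}"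
proof (rule ccontr)
  assume "induced_edges E (insert x A) \<inter> induced_edges E (insert x B) \<noteq> {}"
  then obtain e where "e \<in> E" "e \<subseteq> insert x A" "e \<subseteq> insert x B"
    by (auto simp: induced_edges_def)
  moreover obtain u v where "e = {u, v}" "u \<noteq> v"
    using assms(1) \<open>e \<in> E\<close> by (auto simp: graph_def)
  ultimately show False using assms(2) by auto
qed

section \<open>Linkages and witnesses of gamma-emptyset-connectivity\<close>

definition linkage :: "'a set set \<Rightarrow> 'a set set \<Rightarrow> 'a list set \<Rightarrow> bool" where
  "linkage E P S \<longleftrightarrow> (\<forall>p\<in>S. is_path E p) \<and> edge_disjoint S \<and>
     (\<forall>a b. {a, b} \<in> P \<longrightarrow> (\<exists>p\<in>S. path_betw E p a b))"

definition gamma_witness :: "'a set set \<Rightarrow> 'a set set \<Rightarrow> 'a \<Rightarrow> 'a set \<Rightarrow> 'a list set \<Rightarrow> bool" where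
  "gamma_witness E P x C S \<longleftrightarrow>
     (\<forall>p\<in>S. is_path (induced_edges E (C \<union> {x})) p) \<and> edge_disjoint S \<and>
     (\<forall>a\<in>C. \<forall>b. {a, b} \<in> P \<longrightarrow>
        (\<exists>p\<in>S. path_betw (induced_edges E (C \<union> {x})) p a x \<and> b \<notin> set p) \<or>
        (\<exists>p\<in>S. path_betw (induced_edges E (C \<union> {x})) p a b \<and> x \<notin> set p))"

lemma gamma_empty_connected_iff: "gamma_empty_connected E P x C \<longleftrightarrow> (\<exists>S. gamma_witness E P x C S)"
  by (simp add: gamma_empty_connected_def gamma_witness_def)

lemma terminal_pairsD:
  "terminal_pairs V P \<Longrightarrow> {a, b} \<in> P \<Longrightarrow> a \<noteq> b \<and> a \<in> V \<and> b \<in> V"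
  by (auto simp: terminal_pairs_def doubleton_eq_iff)

lemma edge_disjoint_subset: "edge_disjoint S \<Longrightarrow> T \<subseteq> S \<Longrightarrow> edge_disjoint T"
  by (auto simp: edge_disjoint_def)

lemma edge_disjoint_UN:
  assumes "\<forall>i\<in>I. edge_disjoint (F i)"
    and "\<forall>i\<in>I. \<forall>j\<in>I. i \<noteq> j \<longrightarrow> \<Union>(path_edges ` F i) \<inter> \<Union>(path_edges ` F j) = {}"
  shows "edge_disjoint (\<Union>i\<in>I. F i)"
  unfolding edge_disjoint_def
proof (intro ballI impI)
  fix p q assume "p \<in> (\<Union>i\<in>I. F i)" "q \<in> (\<Union>i\<in>I. F i)" "p \<noteq> q"
  then obtain i j where "i \<in> I" "j \<in> I" "p \<in> F i" "q \<in> F j" by blast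
  then show "path_edges p \<inter> path_edges q = {}"
    using assms \<open>p \<noteq> q\<close> unfolding edge_disjoint_def by (cases "i = j") blast+
qed

lemma edge_disjoint_Union_path_edges:
  assumes "edge_disjoint R" "A \<subseteq> R" "B \<subseteq> R" "A \<inter> B = {}"
  shows "\<Union>(path_edges ` A) \<inter> \<Union>(path_edges ` B) = {}"
proof -
  have "path_edges p \<inter> path_edges q = {}" if "p \<in> A" "q \<in> B" for p q
  proof -
    have "p \<noteq> q" "p \<in> R" "q \<in> R" using that assms(2-4) by auto
    then show ?thesis using assms(1) unfolding edge_disjoint_def by blast
  qed
  then show ?thesis by blast
qed

section \<open>Cutting a linkage at the apex\<close>

definition split_at_vertex :: "'a \<Rightarrow> 'a list \<Rightarrow> 'a list set" where
  "split_at_vertex x p =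
     (if x \<in> set p then {takeWhile (\<lambda>v. v \<noteq> x) p @ [x], dropWhile (\<lambda>v. v \<noteq> x) p} else {p})"

lemma split_at_vertex_eq:
  "x \<notin> set ys \<Longrightarrow> split_at_vertex x (ys @ x # zs) = {ys @ [x], x # zs}"
proof -
  assume "x \<notin> set ys"
  then have "takeWhile (\<lambda>v. v \<noteq> x) (ys @ x # zs) = ys \<and> dropWhile (\<lambda>v. v \<noteq> x) (ys @ x # zs) = x # zs"
    by (induction ys) auto
  then show ?thesis by (simp add: split_at_vertex_def)
qed

lemma split_at_vertex_paths:
  assumes "is_path E p" "q \<in> split_at_vertex x p"
  shows "is_path E q \<and> path_edges q \<subseteq> path_edges p"
proof (cases "x \<in> set p")
  case True
  then obtain ys zs where p: "p = ys @ x # zs" "x \<notin> set ys" by (meson split_list_first)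
  then have q: "q = ys @ [x] \<or> q = x # zs" using assms(2) split_at_vertex_eq[OF p(2)] by simp
  have "path_edges (ys @ [x]) \<subseteq> path_edges p" "path_edges (x # zs) \<subseteq> path_edges p"
    using path_edges_append_subset(1)[of "ys @ [x]" zs] path_edges_append_subset(2)[of "x # zs" ys] p(1)
    by simp_all
  moreover have "distinct (ys @ [x])" "distinct (x # zs)"
    using assms(1) p(1) by (simp_all add: is_path_iff)
  moreover have "path_edges p \<subseteq> E" using assms(1) by (simp add: is_path_iff)
  ultimately show ?thesis using q unfolding is_path_iff by blast
next
  case False
  then show ?thesis using assms by (simp add: split_at_vertex_def)
qed

lemma edge_disjoint_split_at_vertex:
  assumes "distinct p"
  shows "edge_disjoint (split_at_vertex x p)"
proof (cases "x \<in> set p")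
  case True
  then obtain ys zs where p: "p = ys @ x # zs" "x \<notin> set ys" by (meson split_list_first)
  have "path_edges (ys @ [x]) \<inter> path_edges (x # zs) = {}"
  proof (rule ccontr)
    assume "path_edges (ys @ [x]) \<inter> path_edges (x # zs) \<noteq> {}"
    then obtain e where e: "e \<in> path_edges (ys @ [x])" "e \<in> path_edges (x # zs)" by blast
    then have "e \<subseteq> set (ys @ [x]) \<inter> set (x # zs)"
      using path_edge_subset_set[OF e(1)] path_edge_subset_set[OF e(2)] by blast
    then have "e \<subseteq> {x}" using assms p by auto
    moreover obtain u v where "u \<noteq> v" "e = {u, v}"
      using path_edge_doubleton[OF _ e(2)] assms p by auto
    ultimately show False by auto
  qed
  then show ?thesis
    using p split_at_vertex_eq[OF p(2)] by (auto simp: edge_disjoint_def)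
next
  case False
  then show ?thesis by (simp add: split_at_vertex_def edge_disjoint_def)
qed

lemma split_at_vertex_end_piece:
  assumes "path_betw E p a b" "x \<in> set p" "a \<noteq> x" "b \<noteq> x"
  shows "\<exists>q\<in>split_at_vertex x p. path_betw E q a x \<and> b \<notin> set q"
proof -
  obtain ys zs where p: "p = ys @ x # zs" "x \<notin> set ys" using assms(2) by (meson split_list_first)
  have paths: "is_path E (ys @ [x])" "is_path E (x # zs)"
    using split_at_vertex_paths[of E p] split_at_vertex_eq[OF p(2)] assms(1) p(1)
    by (auto simp: path_betw_def)
  have dist: "distinct (ys @ x # zs)" using assms(1) p(1) by (simp add: path_betw_def is_path_iff)
  consider "hd p = a" "last p = b" | "hd p = b" "last p = a"
    using assms(1) by (auto simp: path_betw_def)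
  then show ?thesis
  proof cases
    case 1
    then have "ys \<noteq> []" "zs \<noteq> []" using p(1) assms(3,4) by auto
    then have "hd (ys @ [x]) = a" "b \<in> set zs" using 1 p(1) by auto
    then have "path_betw E (ys @ [x]) a x \<and> b \<notin> set (ys @ [x])"
      using paths(1) dist by (auto simp: path_betw_def)
    then show ?thesis using split_at_vertex_eq[OF p(2)] p(1) by auto
  next
    case 2
    then have "ys \<noteq> []" "zs \<noteq> []" using p(1) assms(3,4) by auto
    then have "last (x # zs) = a" "b \<in> set ys" using 2 p(1) by auto
    then have "path_betw E (x # zs) a x \<and> b \<notin> set (x # zs)"
      using paths(2) dist by (auto simp: path_betw_def)
    then show ?thesis using split_at_vertex_eq[OF p(2)] p(1) by auto
  qed
qed

lemma edge_disjoint_UN_split_at_vertex: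
  assumes "\<forall>p\<in>S. is_path E p" "edge_disjoint S"
  shows "edge_disjoint (\<Union>p\<in>S. split_at_vertex x p)"
proof (rule edge_disjoint_UN)
  show "\<forall>p\<in>S. edge_disjoint (split_at_vertex x p)"
  proof
    fix p assume "p \<in> S"
    then have "distinct p" using assms(1) by (simp add: is_path_iff)
    then show "edge_disjoint (split_at_vertex x p)" by (rule edge_disjoint_split_at_vertex)
  qed
  have sub: "\<Union>(path_edges ` split_at_vertex x p) \<subseteq> path_edges p" if "p \<in> S" for p
    using split_at_vertex_paths[of E p _ x] assms(1) that by blast
  show "\<forall>p\<in>S. \<forall>p'\<in>S. p \<noteq> p' \<longrightarrow>
      \<Union>(path_edges ` split_at_vertex x p) \<inter> \<Union>(path_edges ` split_at_vertex x p') = {}"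
  proof (intro ballI impI)
    fix p p' assume "p \<in> S" "p' \<in> S" "p \<noteq> p'"
    then have "path_edges p \<inter> path_edges p' = {}"
      using assms(2) unfolding edge_disjoint_def by blast
    then show "\<Union>(path_edges ` split_at_vertex x p) \<inter> \<Union>(path_edges ` split_at_vertex x p') = {}"
      using sub[OF \<open>p \<in> S\<close>] sub[OF \<open>p' \<in> S\<close>] by blast
  qed
qed

lemma split_at_vertex_piece_in_component:
  assumes G: "graph V E" and C: "C \<in> components (V - {x}) (del_verts E x)"
    and p: "path_betw E p a b" and a: "a \<in> C" and "b \<noteq> x"
  shows "\<exists>q\<in>split_at_vertex x p. set q \<subseteq> insert x C \<and>
    (path_betw (induced_edges E (C \<union> {x})) q a x \<and> b \<notin> set q \<or>
     path_betw (induced_edges E (C \<union> {x})) q a b \<and> x \<notin> set q)"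
proof (cases "x \<in> set p")
  case True
  have "a \<noteq> x" using C a by (auto simp: components_def)
  then obtain q where q: "q \<in> split_at_vertex x p" "path_betw E q a x" "b \<notin> set q"
    using split_at_vertex_end_piece[OF p True] \<open>b \<noteq> x\<close> by blast
  moreover have "set q \<subseteq> insert x C" using path_to_vertex_subset_component[OF G C q(2) a] .
  ultimately show ?thesis using path_betw_induced[OF q(2), of "C \<union> {x}"] by auto
next
  case False
  have "a \<in> set p" using path_betw_ends_in_set[OF p] by blast
  then have "set p \<subseteq> C"
    using walk_avoiding_vertex_subset_component[OF G C, of p a] p False a
    by (auto simp: path_betw_def is_path_iff)
  then show ?thesis
    using False path_betw_induced[OF p, of "C \<union> {x}"] by (auto simp: split_at_vertex_def)
qed

lemma gamma_empty_connected_if_linkage: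
  assumes G: "graph V E" and "x \<notin> \<Union>P"
    and S: "linkage E P S" and C: "C \<in> components (V - {x}) (del_verts E x)"
  shows "gamma_empty_connected E P x C"
proof -
  define SC where "SC = {q \<in> (\<Union>p\<in>S. split_at_vertex x p). set q \<subseteq> insert x C}"
  have S_paths: "\<forall>p\<in>S. is_path E p" and "edge_disjoint S"
    and S_links: "\<forall>a b. {a, b} \<in> P \<longrightarrow> (\<exists>p\<in>S. path_betw E p a b)"
    using S by (simp_all add: linkage_def)
  have "gamma_witness E P x C SC"
    unfolding gamma_witness_def
  proof (intro conjI ballI allI impI)
    fix q assume "q \<in> SC"
    then obtain p where p: "p \<in> S" "q \<in> split_at_vertex x p" "set q \<subseteq> insert x C"
      by (auto simp: SC_def)
    then have "is_path E q" using split_at_vertex_paths[of E p q x] S_paths by blast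
    then show "is_path (induced_edges E (C \<union> {x})) q" using p(3) is_path_induced by simp
  next
    show "edge_disjoint SC"
      using edge_disjoint_UN_split_at_vertex[OF S_paths \<open>edge_disjoint S\<close>]
      by (rule edge_disjoint_subset) (auto simp: SC_def)
  next
    fix a b assume a: "a \<in> C" and ab: "{a, b} \<in> P"
    obtain p where p: "p \<in> S" "path_betw E p a b" using S_links ab by blast
    have "b \<noteq> x" using \<open>x \<notin> \<Union>P\<close> ab by auto
    from split_at_vertex_piece_in_component[OF G C p(2) a this]
    obtain q where q: "q \<in> split_at_vertex x p" "set q \<subseteq> insert x C"
        "path_betw (induced_edges E (C \<union> {x})) q a x \<and> b \<notin> set q \<or>
         path_betw (induced_edges E (C \<union> {x})) q a b \<and> x \<notin> set q"
      by blast
    have "q \<in> SC" unfolding SC_def using q(1,2) p(1) by blast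
    with q(3)
    show "(\<exists>q\<in>SC. path_betw (induced_edges E (C \<union> {x})) q a x \<and> b \<notin> set q) \<or>
          (\<exists>q\<in>SC. path_betw (induced_edges E (C \<union> {x})) q a b \<and> x \<notin> set q)"
      by blast
  qed
  then show ?thesis unfolding gamma_empty_connected_iff ..
qed

section \<open>Assembling a linkage from witnesses\<close>

lemma edge_disjoint_UN_components:
  assumes "graph V E"
    and "\<forall>C\<in>components (V - {x}) (del_verts E x).
           edge_disjoint (f C) \<and> (\<forall>p\<in>f C. is_path (induced_edges E (C \<union> {x})) p)"
  shows "edge_disjoint (\<Union>C\<in>components (V - {x}) (del_verts E x). f C)"
proof (rule edge_disjoint_UN)
  let ?K = "components (V - {x}) (del_verts E x)"
  show "\<forall>C\<in>?K. edge_disjoint (f C)" using assms(2) by blast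
  have sub: "\<Union>(path_edges ` f C) \<subseteq> induced_edges E (insert x C)" if "C \<in> ?K" for C
  proof -
    have "\<forall>p\<in>f C. is_path (induced_edges E (insert x C)) p" using assms(2) that by simp
    then show ?thesis by (auto simp: is_path_iff)
  qed
  show "\<forall>C\<in>?K. \<forall>C'\<in>?K. C \<noteq> C' \<longrightarrow> \<Union>(path_edges ` f C) \<inter> \<Union>(path_edges ` f C') = {}"
  proof (intro ballI impI)
    fix C C' assume "C \<in> ?K" "C' \<in> ?K" "C \<noteq> C'"
    then have "C \<inter> C' = {}" by (rule components_disjoint)
    then have "induced_edges E (insert x C) \<inter> induced_edges E (insert x C') = {}"
      by (rule induced_edges_insert_disjoint[OF assms(1)])
    then show "\<Union>(path_edges ` f C) \<inter> \<Union>(path_edges ` f C') = {}"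
      using sub[OF \<open>C \<in> ?K\<close>] sub[OF \<open>C' \<in> ?K\<close>] by blast
  qed
qed

lemma gamma_witness_reach:
  assumes "gamma_witness E P x C S" "a \<in> C" "{a, b} \<in> P"
  shows "(\<exists>r\<in>S. path_betw E r a x) \<or> (\<exists>r\<in>S. path_betw E r a b)"
proof -
  obtain r where r: "r \<in> S" "path_betw (induced_edges E (C \<union> {x})) r a x \<or>
      path_betw (induced_edges E (C \<union> {x})) r a b"
    using assms unfolding gamma_witness_def by blast
  then have "path_betw E r a x \<or> path_betw E r a b"
    using path_betw_of_induced[of E "C \<union> {x}" r] by blast
  then show ?thesis using r(1) by blast
qed

definition attached_pieces :: "'a list set \<Rightarrow> 'a \<Rightarrow> 'a set \<Rightarrow> 'a list set" where
  "attached_pieces R x q = {r \<in> R. {hd r, last r} \<subseteq> insert x q \<and> {hd r, last r} \<inter> q \<noteq> {}}"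

lemma attached_pieces_subset: "attached_pieces R x q \<subseteq> R"
  by (auto simp: attached_pieces_def)

lemma attached_pieces_disjoint:
  assumes "q1 \<inter> q2 = {}" "x \<notin> q1" "x \<notin> q2"
  shows "attached_pieces R x q1 \<inter> attached_pieces R x q2 = {}"
proof (rule ccontr)
  assume "attached_pieces R x q1 \<inter> attached_pieces R x q2 \<noteq> {}"
  then obtain r t where "t \<in> {hd r, last r}" "t \<in> q1" "{hd r, last r} \<subseteq> insert x q2"
    unfolding attached_pieces_def by blast
  then show False using assms by blast
qed

lemma path_betw_via_pieces:
  assumes a: "(\<exists>r\<in>R. path_betw E r a x) \<or> (\<exists>r\<in>R. path_betw E r a b)"
    and b: "(\<exists>r\<in>R. path_betw E r b x) \<or> (\<exists>r\<in>R. path_betw E r b a)"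
  shows "\<exists>g. path_betw E g a b \<and> path_edges g \<subseteq> \<Union>(path_edges ` attached_pieces R x {a, b})"
proof -
  have piece: "r \<in> attached_pieces R x {a, b}"
    if "r \<in> R" "path_betw E r u v" "{u, v} \<in> {{a, x}, {b, x}, {a, b}}" for r u v
    using that by (auto simp: attached_pieces_def path_betw_iff)
  show ?thesis
  proof (cases "\<exists>r\<in>R. path_betw E r a b \<or> path_betw E r b a")
    case True
    then obtain r where "r \<in> R" "path_betw E r a b \<or> path_betw E r b a" by blast
    then have "path_betw E r a b" using path_betw_commute[of E r b a] by blast
    moreover have "path_edges r \<subseteq> \<Union>(path_edges ` attached_pieces R x {a, b})"
      using piece[of r a b] \<open>r \<in> R\<close> calculation by blast
    ultimately show ?thesis by blast
  next
    case False
    then obtain r1 r2 where r: "r1 \<in> R" "path_betw E r1 a x" "r2 \<in> R" "path_betw E r2 b x"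
      using a b by blast
    then have "path_betw E r2 x b" using path_betw_commute[of E r2 b x] by blast
    then obtain g where "path_betw E g a b" "path_edges g \<subseteq> path_edges r1 \<union> path_edges r2"
      using path_betw_concat[OF r(2)] by blast
    moreover have "r1 \<in> attached_pieces R x {a, b}" "r2 \<in> attached_pieces R x {a, b}"
      using piece[of r1 a x] piece[of r2 b x] r by auto
    then have "path_edges r1 \<union> path_edges r2 \<subseteq> \<Union>(path_edges ` attached_pieces R x {a, b})"
      by blast
    ultimately show ?thesis by blast
  qed
qed

lemma linkage_if_disjoint_edge_budgets:
  assumes "\<forall>q\<in>P. \<exists>g. is_path E g \<and> {hd g, last g} = q \<and> path_edges g \<subseteq> A q"
    and "\<forall>q1\<in>P. \<forall>q2\<in>P. q1 \<noteq> q2 \<longrightarrow> A q1 \<inter> A q2 = {}"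
  shows "\<exists>S. linkage E P S"
proof -
  from bchoice[OF assms(1)] obtain g where
    g: "\<forall>q\<in>P. is_path E (g q) \<and> {hd (g q), last (g q)} = q \<and> path_edges (g q) \<subseteq> A q"
    by blast
  have "edge_disjoint (g ` P)"
    unfolding edge_disjoint_def
  proof (intro ballI impI)
    fix p p' assume "p \<in> g ` P" "p' \<in> g ` P" "p \<noteq> p'"
    then obtain q q' where q: "q \<in> P" "q' \<in> P" "p = g q" "p' = g q'" "q \<noteq> q'" by blast
    then have "A q \<inter> A q' = {}" using assms(2) by blast
    moreover have "path_edges p \<subseteq> A q" "path_edges p' \<subseteq> A q'" using g q by simp_all
    ultimately show "path_edges p \<inter> path_edges p' = {}" by blast
  qed
  moreover have "\<exists>p\<in>g ` P. path_betw E p a b" if "{a, b} \<in> P" for a b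
  proof
    show "path_betw E (g {a, b}) a b" using g that by (simp add: path_betw_iff)
  qed (use that in blast)
  moreover have "\<forall>p\<in>g ` P. is_path E p" using g by blast
  ultimately have "linkage E P (g ` P)" by (simp add: linkage_def)
  then show ?thesis ..
qed

lemma linkage_if_gamma_empty_connected:
  assumes G: "graph V E" and P: "terminal_pairs V P" "x \<notin> \<Union>P"
    and disjoint_pairs: "\<forall>q1\<in>P. \<forall>q2\<in>P. q1 \<noteq> q2 \<longrightarrow> q1 \<inter> q2 = {}"
    and gamma: "\<forall>C\<in>components (V - {x}) (del_verts E x). gamma_empty_connected E P x C"
  shows "\<exists>S. linkage E P S"
proof -
  let ?K = "components (V - {x}) (del_verts E x)"
  obtain f where f: "\<forall>C\<in>?K. gamma_witness E P x C (f C)"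
    using bchoice[OF gamma[unfolded gamma_empty_connected_iff]] by blast
  define R where "R = (\<Union>C\<in>?K. f C)"
  have "edge_disjoint R"
    unfolding R_def using edge_disjoint_UN_components[OF G] f by (simp add: gamma_witness_def)
  have reach: "(\<exists>r\<in>R. path_betw E r a x) \<or> (\<exists>r\<in>R. path_betw E r a b)" if ab: "{a, b} \<in> P" for a b
  proof -
    have "a \<in> V - {x}" using terminal_pairsD[OF P(1) ab] P(2) ab by auto
    then obtain C where C: "C \<in> ?K" "a \<in> C"
      using component_exists[of a "V - {x}" "del_verts E x"] by blast
    then show ?thesis
      using gamma_witness_reach[OF f[rule_format, OF C(1)] C(2) ab] unfolding R_def by blast
  qed
  show ?thesis
  proof (rule linkage_if_disjoint_edge_budgets[where A = "\<lambda>q. \<Union>(path_edges ` attached_pieces R x q)"])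
    show "\<forall>q\<in>P. \<exists>g. is_path E g \<and> {hd g, last g} = q \<and>
        path_edges g \<subseteq> \<Union>(path_edges ` attached_pieces R x q)"
    proof
      fix q assume "q \<in> P"
      then obtain a b where q: "q = {a, b}" using P(1) by (auto simp: terminal_pairs_def)
      then have "{a, b} \<in> P" "{b, a} \<in> P" using \<open>q \<in> P\<close> by (simp_all add: insert_commute)
      then obtain g where "path_betw E g a b" "path_edges g \<subseteq> \<Union>(path_edges ` attached_pieces R x q)"
        using path_betw_via_pieces[OF reach reach] q by blast
      then show "\<exists>g. is_path E g \<and> {hd g, last g} = q \<and>
          path_edges g \<subseteq> \<Union>(path_edges ` attached_pieces R x q)"
        using q by (auto simp: path_betw_iff)
    qed
    show "\<forall>q1\<in>P. \<forall>q2\<in>P. q1 \<noteq> q2 \<longrightarrow>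
        \<Union>(path_edges ` attached_pieces R x q1) \<inter> \<Union>(path_edges ` attached_pieces R x q2) = {}"
    proof (intro ballI impI)
      fix q1 q2 assume "q1 \<in> P" "q2 \<in> P" "q1 \<noteq> q2"
      then have "q1 \<inter> q2 = {}" "x \<notin> q1" "x \<notin> q2" using disjoint_pairs P(2) by auto
      then have "attached_pieces R x q1 \<inter> attached_pieces R x q2 = {}"
        by (rule attached_pieces_disjoint)
      then show "\<Union>(path_edges ` attached_pieces R x q1) \<inter> \<Union>(path_edges ` attached_pieces R x q2) = {}"
        by (rule edge_disjoint_Union_path_edges[OF \<open>edge_disjoint R\<close> attached_pieces_subset attached_pieces_subset])
    qed
  qed
qed

theorem mainTheorem11:
  fixes V :: "'a set" and E :: "'a set set" and P :: "'a set set" and x :: 'a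
  assumes "graph V E"
    and "terminal_pairs V P"
    and "x \<in> V"
    and "forest (V - {x}) (del_verts E x)"
    and "\<forall>q1\<in>P. \<forall>q2\<in>P. q1 \<noteq> q2 \<longrightarrow> q1 \<inter> q2 = {}"
    and "\<forall>t\<in>\<Union>P. degree E t = 1"
    and "\<forall>a b. {a, b} \<in> P \<longrightarrow> {a, b} \<notin> E"
    and "\<forall>v. {x, v} \<in> E \<longrightarrow> degree (del_verts E x) v = 1"
    and "x \<notin> \<Union>P"
  shows "(\<exists>S. (\<forall>p\<in>S. is_path E p) \<and> edge_disjoint S \<and>
            (\<forall>a b. {a, b} \<in> P \<longrightarrow> (\<exists>p\<in>S. path_betw E p a b)))
         \<longleftrightarrow> (\<forall>C\<in>components (V - {x}) (del_verts E x). gamma_empty_connected E P x C)"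
proof -
  have "(\<exists>S. linkage E P S) \<longleftrightarrow>
        (\<forall>C\<in>components (V - {x}) (del_verts E x). gamma_empty_connected E P x C)"
    using gamma_empty_connected_if_linkage[OF assms(1,9)]
      linkage_if_gamma_empty_connected[OF assms(1,2,9,5)] by blast
  then show ?thesis by (simp add: linkage_def)
qed

end
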